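(* Let $\mathcal{O}$ be a cube orientation. If $\mathcal{O}$ has property L (i.e., every L-graph $\mathcal{L}_{\mathcal{O}}(V)$, $V\in\mathrm{vert}\,\mathcal{O}$, is acyclic), then $\mathcal{O}$ is a unique sink orientation.
   Context: For sets $U,V$ let $U\oplus V=(U\cup V)\setminus(U\cap V)$, and for $U\subseteq W$ let $[U,W]=\{V: U\subseteq V\subseteq W\}$. A cube orientation is a directed graph $\mathcal{O}$ with vertex set $\mathrm{vert}\,\mathcal{O}=[U,W]$ for some $U\subseteq W$ which, for every $V\in[U,W]$ and every $i\in W\setminus U$ (the carrier), contains exactly one of the directed edges $(V,V\oplus\{i\})$ and $(V\oplus\{i\},V)$. Its outmap is $\phi_{\mathcal{O}}(V)=\{i\in W\setminus U: (V,V\oplus\{i\})\in\mathcal{O}\}$. For $V\in[U,W]$, the L-graph $\mathcal{L}_{\mathcal{O}}(V)$ is the directed graph with vertex set $W\setminus V$ and an arc $(i,j)$ for distinct $i,j\in W\setminus V$ whenever $j\in\phi_{\mathcal{O}}(V)\oplus\phi_{\mathcal{O}}(V\cup\{i\})$. $\mathcal{O}$ has property L if all its L-graphs are acyclic. A face of $\mathcal{O}$ is the subgraph induced by an interval contained in $\mathrm{vert}\,\mathcal{O}$; $\mathcal{O}$ is a unique sink orientation (USO) if every face has exactly one sink (vertex with no outgoing edge in the face). *)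

theory Defs
  imports Main
begin

definition symdiff :: "'a set \<Rightarrow> 'a set \<Rightarrow> 'a set" (infixl "\<ominus>" 65) where
  "symdiff U V = (U \<union> V) - (U \<inter> V)"

definition interval :: "'a set \<Rightarrow> 'a set \<Rightarrow> 'a set set" where
  "interval U W = {V. U \<subseteq> V \<and> V \<subseteq> W}"

definition cube_orientation :: "('a set \<times> 'a set) set \<Rightarrow> 'a set \<Rightarrow> 'a set \<Rightarrow> bool" where
  "cube_orientation Ori U W \<longleftrightarrow> finite W \<and> U \<subseteq> W \<and>
     Ori \<subseteq> {(V, V \<ominus> {i}) | V i. V \<in> interval U W \<and> i \<in> W - U} \<and>
     (\<forall>V \<in> interval U W. \<forall>i \<in> W - U.
        ((V, V \<ominus> {i}) \<in> Ori) \<noteq> ((V \<ominus> {i}, V) \<in> Ori))"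

definition outmap :: "('a set \<times> 'a set) set \<Rightarrow> 'a set \<Rightarrow> 'a set \<Rightarrow> 'a set \<Rightarrow> 'a set" where
  "outmap Ori U W V = {i \<in> W - U. (V, V \<ominus> {i}) \<in> Ori}"

definition L_graph :: "('a set \<times> 'a set) set \<Rightarrow> 'a set \<Rightarrow> 'a set \<Rightarrow> 'a set \<Rightarrow> ('a \<times> 'a) set" where
  "L_graph Ori U W V = {(i, j). i \<in> W - V \<and> j \<in> W - V \<and> i \<noteq> j \<and>
      j \<in> outmap Ori U W V \<ominus> outmap Ori U W (V \<union> {i})}"

definition property_L :: "('a set \<times> 'a set) set \<Rightarrow> 'a set \<Rightarrow> 'a set \<Rightarrow> bool" where
  "property_L Ori U W \<longleftrightarrow> (\<forall>V \<in> interval U W. acyclic (L_graph Ori U W V))"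

definition is_sink_in_face :: "('a set \<times> 'a set) set \<Rightarrow> 'a set \<Rightarrow> 'a set \<Rightarrow> 'a set \<Rightarrow> bool" where
  "is_sink_in_face Ori A B V \<longleftrightarrow> V \<in> interval A B \<and>
     (\<forall>V'. (V, V') \<in> Ori \<longrightarrow> V' \<notin> interval A B)"

definition unique_sink_orientation :: "('a set \<times> 'a set) set \<Rightarrow> 'a set \<Rightarrow> 'a set \<Rightarrow> bool" where
  "unique_sink_orientation Ori U W \<longleftrightarrow>
     (\<forall>A B. interval A B \<noteq> {} \<and> interval A B \<subseteq> interval U W \<longrightarrow>
        (\<exists>!V. is_sink_in_face Ori A B V))"

end

theory Submission
  imports Defs
begin

text \<open>For a face \<open>[A,B]\<close> write \<open>\<psi>(X) = \<phi>(X) \<inter> (B - A)\<close>, where \<open>\<phi>\<close> is the outmap; the sinks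
  of the face are the zeros of \<open>\<psi>\<close>. By induction on the dimension, \<open>\<psi>\<close> is injective on \<open>[A,B]\<close>,
  hence a bijection onto the subsets of \<open>B - A\<close>, so every face has exactly one sink.

  In the induction step all facets are bijective, so for \<open>s \<in> B - A\<close> and \<open>T \<subseteq> B - A - {s}\<close> the
  fibres of \<open>\<psi>\<close> over \<open>T\<close> and \<open>T \<union> {s}\<close> have two elements together; one fibre of size one
  therefore forces all fibres to have size one. The fibre over \<open>\<psi>(A)\<close> is \<open>{A}\<close>: every vertex
  other than \<open>B\<close> shares a lower facet with \<open>A\<close>, and property L separates \<open>A\<close> from \<open>B\<close>. Indeed, if
  \<open>t\<close> is a sink of the L-graph at \<open>A\<close> within \<open>B - A\<close>, then \<open>\<phi>(A)\<close> and \<open>\<phi>(A \<union> {t})\<close> agree on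
  \<open>B - A - {t}\<close>, while the upper facet \<open>[A \<union> {t}, B]\<close> separates \<open>A \<union> {t}\<close> from \<open>B\<close> (or
  \<open>B = A \<union> {t}\<close>, and the edge in direction \<open>t\<close> does).\<close>

lemma mem_symdiff [simp]: "x \<in> U \<ominus> V \<longleftrightarrow> (x \<in> U) \<noteq> (x \<in> V)"
  by (auto simp: symdiff_def)

lemma symdiff_symdiff_cancel [simp]: "V \<ominus> X \<ominus> X = V"
  by auto

lemma mem_interval [simp]: "V \<in> interval A B \<longleftrightarrow> A \<subseteq> V \<and> V \<subseteq> B"
  by (simp add: interval_def)

lemma symdiff_singleton_mem_interval_iff:
  "V \<in> interval A B \<Longrightarrow> V \<ominus> {i} \<in> interval A B \<longleftrightarrow> i \<in> B - A"
  by (cases "i \<in> V") auto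

lemma finite_interval: "finite B \<Longrightarrow> finite (interval A B)"
  by (rule finite_subset[of _ "Pow B"]) auto

lemma bij_betw_interval_Pow:
  "A \<subseteq> B \<Longrightarrow> bij_betw (\<lambda>V. V - A) (interval A B) (Pow (B - A))"
  by (rule bij_betw_byWitness[where f' = "(\<union>) A"]) auto

lemma inj_on_interval_image_eq_Pow:
  assumes "finite B" "A \<subseteq> B" "inj_on g (interval A B)" "\<And>X. g X \<subseteq> B - A"
  shows "g ` interval A B = Pow (B - A)"
proof (rule card_subset_eq)
  show "finite (Pow (B - A))" using assms(1) by simp
  show "g ` interval A B \<subseteq> Pow (B - A)" using assms(4) by auto
  show "card (g ` interval A B) = card (Pow (B - A))"
    using assms(3) bij_betw_same_card[OF bij_betw_interval_Pow[OF assms(2)]]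
    by (simp add: card_image)
qed

lemma inj_on_interval_card_fiber:
  assumes "finite B" "A \<subseteq> B" "inj_on g (interval A B)" "\<And>X. g X \<subseteq> B - A" "T \<subseteq> B - A"
  shows "card {X \<in> interval A B. g X = T} = 1"
proof -
  have "T \<in> g ` interval A B"
    using assms(5) inj_on_interval_image_eq_Pow[OF assms(1-4)] by simp
  then obtain X where X: "X \<in> interval A B" "g X = T" by (rule imageE) simp
  have "{X \<in> interval A B. g X = T} = {X}"
  proof (intro equalityI subsetI)
    fix Y assume "Y \<in> {X \<in> interval A B. g X = T}"
    then show "Y \<in> {X}" using X inj_onD[OF assms(3), of Y X] by simp
  qed (use X in simp)
  then show ?thesis by simp
qed

lemma card_fibers_insert_eq_2:
  fixes f :: "'a set \<Rightarrow> 'a set"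
  assumes "finite B" "A \<subseteq> B" "s \<in> B - A" "T \<subseteq> B - A - {s}"
    and lower: "inj_on (\<lambda>X. f X \<inter> (B - {s} - A)) (interval A (B - {s}))"
    and upper: "inj_on (\<lambda>X. f X \<inter> (B - insert s A)) (interval (insert s A) B)"
  shows "card {X \<in> interval A B. f X \<inter> (B - A) = T}
       + card {X \<in> interval A B. f X \<inter> (B - A) = insert s T} = 2"
proof -
  let ?fiber = "\<lambda>T. {X \<in> interval A B. f X \<inter> (B - A) = T}"
  let ?lower = "{X \<in> interval A (B - {s}). f X \<inter> (B - {s} - A) = T}"
  let ?upper = "{X \<in> interval (insert s A) B. f X \<inter> (B - insert s A) = T}"
  have lower_1: "card ?lower = 1"
    by (rule inj_on_interval_card_fiber[OF _ _ lower]) (use assms in auto)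
  have upper_1: "card ?upper = 1"
    by (rule inj_on_interval_card_fiber[OF _ _ upper]) (use assms in auto)
  have fibers_eq: "?fiber T \<union> ?fiber (insert s T) = ?lower \<union> ?upper"
  proof (rule set_eqI)
    fix X
    have "X \<in> interval A B \<longleftrightarrow> X \<in> interval A (B - {s}) \<or> X \<in> interval (insert s A) B"
      using assms(3) by auto
    moreover have "f X \<inter> (B - A) = T \<or> f X \<inter> (B - A) = insert s T \<longleftrightarrow>
        f X \<inter> (B - A - {s}) = T"
      using assms(3,4) by auto
    moreover have "B - {s} - A = B - A - {s}" "B - insert s A = B - A - {s}" by auto
    ultimately show "X \<in> ?fiber T \<union> ?fiber (insert s T) \<longleftrightarrow> X \<in> ?lower \<union> ?upper"
      by (simp only: mem_Collect_eq Un_iff) blast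
  qed
  have finite_fiber: "finite (?fiber T')" for T'
    using finite_interval[OF assms(1)] by (rule finite_subset[rotated]) blast
  have "card (?fiber T) + card (?fiber (insert s T)) = card (?fiber T \<union> ?fiber (insert s T))"
    by (rule card_Un_disjoint[symmetric, OF finite_fiber finite_fiber]) (use assms(4) in auto)
  also have "\<dots> = card (?lower \<union> ?upper)" by (simp only: fibers_eq)
  also have "\<dots> = card ?lower + card ?upper"
  proof (rule card_Un_disjoint)
    show "finite ?lower" by (rule card_ge_0_finite) (subst lower_1, simp)
    show "finite ?upper" by (rule card_ge_0_finite) (subst upper_1, simp)
    show "?lower \<inter> ?upper = {}" by auto
  qed
  finally show ?thesis using lower_1 upper_1 by simp
qed

lemma eq_1_if_flip_sums_eq_2:
  fixes N :: "'a set \<Rightarrow> nat"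
  assumes "finite C"
    and flip: "\<And>T s. s \<in> C \<Longrightarrow> T \<subseteq> C - {s} \<Longrightarrow> N T + N (insert s T) = 2"
    and "T\<^sub>0 \<subseteq> C" "N T\<^sub>0 = 1" "T \<subseteq> C"
  shows "N T = 1"
proof -
  have flip_1: "N (T' \<ominus> {s}) = 1" if "N T' = 1" "T' \<subseteq> C" "s \<in> C" for T' s
  proof (cases "s \<in> T'")
    case True
    have "T' - {s} \<subseteq> C - {s}" using that(2) by blast
    then have "N (T' - {s}) + N (insert s (T' - {s})) = 2" by (rule flip[OF that(3)])
    moreover have "insert s (T' - {s}) = T'" "T' \<ominus> {s} = T' - {s}" using True by auto
    ultimately show ?thesis using that(1) by simp
  next
    case False
    have "T' \<subseteq> C - {s}" using that(2) False by blast
    then have "N T' + N (insert s T') = 2" by (rule flip[OF that(3)])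
    moreover have "T' \<ominus> {s} = insert s T'" using False by auto
    ultimately show ?thesis using that(1) by simp
  qed
  have "N (T\<^sub>0 \<ominus> S) = 1" if "S \<subseteq> C" for S
    using finite_subset[OF that assms(1)] that
  proof (induction S rule: finite_induct)
    case empty
    then show ?case using assms(4) by (simp add: symdiff_def)
  next
    case (insert s S)
    have "N (T\<^sub>0 \<ominus> S \<ominus> {s}) = 1"
      by (rule flip_1) (use assms(3) insert in auto)
    moreover have "T\<^sub>0 \<ominus> S \<ominus> {s} = T\<^sub>0 \<ominus> insert s S" using insert.hyps(2) by auto
    ultimately show ?case by simp
  qed
  moreover have "T\<^sub>0 \<ominus> (T\<^sub>0 \<ominus> T) = T" by auto
  moreover have "T\<^sub>0 \<ominus> T \<subseteq> C" using assms(3,5) by auto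
  ultimately show ?thesis by metis
qed

lemma fiber_of_bottom_eq_singleton:
  fixes f :: "'a set \<Rightarrow> 'a set"
  assumes "A \<subseteq> B"
    and lower: "\<And>s. s \<in> B - A \<Longrightarrow> inj_on (\<lambda>X. f X \<inter> (B - {s} - A)) (interval A (B - {s}))"
    and bottom_top: "A \<noteq> B \<Longrightarrow> f A \<inter> (B - A) \<noteq> f B \<inter> (B - A)"
  shows "{X \<in> interval A B. f X \<inter> (B - A) = f A \<inter> (B - A)} = {A}"
proof (intro equalityI subsetI)
  fix X assume X: "X \<in> {X \<in> interval A B. f X \<inter> (B - A) = f A \<inter> (B - A)}"
  show "X \<in> {A}"
  proof (cases "X = B")
    case True
    then show ?thesis using X bottom_top by auto
  next
    case False
    then obtain j where "j \<in> B - X" using X by auto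
    then have "j \<in> B - A" "X \<in> interval A (B - {j})" "A \<in> interval A (B - {j})"
      using X assms(1) by auto
    moreover have "f X \<inter> (B - {j} - A) = f A \<inter> (B - {j} - A)" using X by auto
    ultimately have "X = A" using inj_onD[OF lower] by metis
    then show ?thesis by simp
  qed
qed (use assms(1) in auto)

lemma inj_on_face_if_proper_faces_inj:
  fixes f :: "'a set \<Rightarrow> 'a set"
  assumes "finite B" "A \<subseteq> B"
    and proper: "\<And>A' B'. A \<subseteq> A' \<Longrightarrow> A' \<subseteq> B' \<Longrightarrow> B' \<subseteq> B \<Longrightarrow> B' - A' \<subset> B - A \<Longrightarrow>
                   inj_on (\<lambda>X. f X \<inter> (B' - A')) (interval A' B')"
    and bottom_top: "A \<noteq> B \<Longrightarrow> f A \<inter> (B - A) \<noteq> f B \<inter> (B - A)"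
  shows "inj_on (\<lambda>X. f X \<inter> (B - A)) (interval A B)"
proof -
  define N where "N T = card {X \<in> interval A B. f X \<inter> (B - A) = T}" for T
  have lower: "inj_on (\<lambda>X. f X \<inter> (B - {s} - A)) (interval A (B - {s}))" if "s \<in> B - A" for s
    by (rule proper) (use that assms(2) in auto)
  have upper: "inj_on (\<lambda>X. f X \<inter> (B - insert s A)) (interval (insert s A) B)" if "s \<in> B - A" for s
    by (rule proper) (use that assms(2) in auto)
  have flip: "N T + N (insert s T) = 2" if "s \<in> B - A" "T \<subseteq> B - A - {s}" for s T
    unfolding N_def
    by (rule card_fibers_insert_eq_2[OF assms(1,2) that lower[OF that(1)] upper[OF that(1)]])
  have "{X \<in> interval A B. f X \<inter> (B - A) = f A \<inter> (B - A)} = {A}"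
    by (rule fiber_of_bottom_eq_singleton[OF assms(2) _ bottom_top]) (rule lower)
  then have bottom_1: "N (f A \<inter> (B - A)) = 1" by (simp add: N_def)
  have fibers_1: "N (f X \<inter> (B - A)) = 1" for X
    by (rule eq_1_if_flip_sums_eq_2[OF _ flip _ bottom_1]) (use assms(1) in auto)
  show ?thesis
  proof (rule inj_onI)
    fix X Y assume "X \<in> interval A B" "Y \<in> interval A B" "f X \<inter> (B - A) = f Y \<inter> (B - A)"
    then have "X \<in> {Z \<in> interval A B. f Z \<inter> (B - A) = f X \<inter> (B - A)}"
      "Y \<in> {Z \<in> interval A B. f Z \<inter> (B - A) = f X \<inter> (B - A)}" by auto
    moreover obtain Z where "{Z \<in> interval A B. f Z \<inter> (B - A) = f X \<inter> (B - A)} = {Z}"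
      using fibers_1[of X] unfolding N_def by (rule card_1_singletonE)
    ultimately show "X = Y" by (metis singletonD)
  qed
qed

lemma acyclic_obtain_sink_in:
  assumes "acyclic r" "finite S" "S \<noteq> {}"
  obtains t where "t \<in> S" "\<And>k. k \<in> S \<Longrightarrow> (t, k) \<notin> r"
proof -
  let ?r = "r \<inter> S \<times> S"
  have "finite ?r" using assms(2) by blast
  moreover have "acyclic ?r" using assms(1) acyclic_subset by blast
  ultimately have "wf (?r\<inverse>)" by (rule finite_acyclic_wf_converse)
  then obtain t where "t \<in> S" "\<And>k. (k, t) \<in> ?r\<inverse> \<Longrightarrow> k \<notin> S"
    using assms(3) unfolding wf_eq_minimal by blast
  then show thesis using that by blast
qed

context
  fixes Ori :: "('a set \<times> 'a set) set" and U W :: "'a set"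
  assumes orientation: "cube_orientation Ori U W"
begin

abbreviation \<phi> :: "'a set \<Rightarrow> 'a set" where
  "\<phi> \<equiv> outmap Ori U W"

lemma finite_carrier: "finite W"
  using orientation by (simp add: cube_orientation_def)

lemma edge_obtain_direction:
  assumes "(V, V') \<in> Ori"
  obtains i where "i \<in> W - U" "V' = V \<ominus> {i}"
  using assms orientation unfolding cube_orientation_def by blast

lemma outmap_symdiff_edge:
  assumes "V \<in> interval U W" "i \<in> W - U"
  shows "i \<in> \<phi> V \<ominus> \<phi> (V \<ominus> {i})"
proof -
  have "((V, V \<ominus> {i}) \<in> Ori) \<noteq> ((V \<ominus> {i}, V) \<in> Ori)"
    using orientation assms by (simp add: cube_orientation_def)
  then show ?thesis using assms by (auto simp: outmap_def)
qed

lemma outmap_bottom_ne_top: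
  assumes "property_L Ori U W" "U \<subseteq> A" "A \<subseteq> B" "B \<subseteq> W" "A \<noteq> B"
    and upper: "\<And>s. s \<in> B - A \<Longrightarrow>
                  inj_on (\<lambda>X. \<phi> X \<inter> (B - insert s A)) (interval (insert s A) B)"
  shows "\<phi> A \<inter> (B - A) \<noteq> \<phi> B \<inter> (B - A)"
proof -
  have "acyclic (L_graph Ori U W A)"
    using assms(1-4) by (auto simp: property_L_def)
  moreover have "finite (B - A)"
    using finite_carrier assms(4) by (auto intro: finite_subset)
  moreover have "B - A \<noteq> {}" using assms(3,5) by blast
  ultimately obtain t where t: "t \<in> B - A"
    and no_arc: "\<And>k. k \<in> B - A \<Longrightarrow> (t, k) \<notin> L_graph Ori U W A"
    using acyclic_obtain_sink_in by metis
  have agree: "k \<notin> \<phi> A \<ominus> \<phi> (insert t A)" if "k \<in> B - A" "k \<noteq> t" for k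
    using no_arc[OF that(1)] that t assms(4) by (auto simp: L_graph_def)
  show ?thesis
  proof (cases "insert t A = B")
    case True
    have "t \<in> \<phi> A \<ominus> \<phi> (A \<ominus> {t})"
      by (rule outmap_symdiff_edge) (use assms(2-4) t in auto)
    moreover have "A \<ominus> {t} = B" using True t by auto
    ultimately show ?thesis using t by auto
  next
    case False
    have "insert t A \<in> interval (insert t A) B" "B \<in> interval (insert t A) B"
      using t assms(3) by auto
    then have "\<phi> (insert t A) \<inter> (B - insert t A) \<noteq> \<phi> B \<inter> (B - insert t A)"
      using False inj_onD[OF upper[OF t]] by blast
    then obtain k where "k \<in> B - insert t A" "k \<in> \<phi> (insert t A) \<ominus> \<phi> B" by auto
    with agree[of k] have "k \<in> B - A" "k \<in> \<phi> A \<ominus> \<phi> B" by auto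
    then show ?thesis by auto
  qed
qed

lemma inj_on_face_outmap:
  assumes "property_L Ori U W" "U \<subseteq> A" "A \<subseteq> B" "B \<subseteq> W"
  shows "inj_on (\<lambda>X. \<phi> X \<inter> (B - A)) (interval A B)"
  using assms(2-)
proof (induction "card (B - A)" arbitrary: A B rule: less_induct)
  case less
  have "finite B" using finite_carrier less.prems(3) by (rule finite_subset[rotated])
  show ?case
  proof (rule inj_on_face_if_proper_faces_inj[OF \<open>finite B\<close> less.prems(2)])
    show proper: "inj_on (\<lambda>X. \<phi> X \<inter> (B' - A')) (interval A' B')"
      if "A \<subseteq> A'" "A' \<subseteq> B'" "B' \<subseteq> B" "B' - A' \<subset> B - A" for A' B'
      using less.hyps[OF psubset_card_mono[OF _ that(4)]] \<open>finite B\<close> that less.prems by auto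
    show "\<phi> A \<inter> (B - A) \<noteq> \<phi> B \<inter> (B - A)" if "A \<noteq> B"
    proof (rule outmap_bottom_ne_top[OF assms(1) less.prems that])
      show "inj_on (\<lambda>X. \<phi> X \<inter> (B - insert s A)) (interval (insert s A) B)" if "s \<in> B - A" for s
        by (rule proper) (use that less.prems(2) in auto)
    qed
  qed
qed

lemma is_sink_in_face_iff:
  assumes "U \<subseteq> A" "B \<subseteq> W"
  shows "is_sink_in_face Ori A B V \<longleftrightarrow> V \<in> interval A B \<and> \<phi> V \<inter> (B - A) = {}"
proof -
  have "(\<exists>V'. (V, V') \<in> Ori \<and> V' \<in> interval A B) \<longleftrightarrow> \<phi> V \<inter> (B - A) \<noteq> {}"
    if V: "V \<in> interval A B"
  proof
    assume "\<exists>V'. (V, V') \<in> Ori \<and> V' \<in> interval A B"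
    then obtain V' where edge: "(V, V') \<in> Ori" and V': "V' \<in> interval A B" by blast
    obtain i where i: "i \<in> W - U" "V' = V \<ominus> {i}"
      using edge by (rule edge_obtain_direction)
    have "i \<in> B - A"
      using V' unfolding i(2) by (rule symdiff_singleton_mem_interval_iff[OF V, THEN iffD1])
    moreover have "i \<in> \<phi> V" using edge i by (simp add: outmap_def)
    ultimately show "\<phi> V \<inter> (B - A) \<noteq> {}" by blast
  next
    assume "\<phi> V \<inter> (B - A) \<noteq> {}"
    then obtain i where i: "i \<in> B - A" "(V, V \<ominus> {i}) \<in> Ori" by (auto simp: outmap_def)
    moreover have "V \<ominus> {i} \<in> interval A B"
      using i(1) by (rule symdiff_singleton_mem_interval_iff[OF V, THEN iffD2])
    ultimately show "\<exists>V'. (V, V') \<in> Ori \<and> V' \<in> interval A B" by blast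
  qed
  then show ?thesis unfolding is_sink_in_face_def by blast
qed

lemma unique_sink_if_inj_on_face:
  assumes "U \<subseteq> A" "A \<subseteq> B" "B \<subseteq> W"
    and "inj_on (\<lambda>X. \<phi> X \<inter> (B - A)) (interval A B)"
  shows "\<exists>!V. is_sink_in_face Ori A B V"
proof -
  have "finite B" using finite_carrier assms(3) by (rule finite_subset[rotated])
  then have "card {X \<in> interval A B. \<phi> X \<inter> (B - A) = {}} = 1"
    by (rule inj_on_interval_card_fiber) (use assms(2,4) in auto)
  then obtain V where V: "{X \<in> interval A B. \<phi> X \<inter> (B - A) = {}} = {V}"
    by (rule card_1_singletonE)
  have "is_sink_in_face Ori A B X \<longleftrightarrow> X \<in> {X \<in> interval A B. \<phi> X \<inter> (B - A) = {}}" for X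
    unfolding is_sink_in_face_iff[OF assms(1,3)] by (rule mem_Collect_eq[symmetric])
  then show ?thesis unfolding V by simp
qed

end

theorem theorem3p3:
  fixes Ori :: "('a set \<times> 'a set) set" and U W :: "'a set"
  assumes "cube_orientation Ori U W"
    and "property_L Ori U W"
  shows "unique_sink_orientation Ori U W"
  unfolding unique_sink_orientation_def
proof (intro allI impI)
  fix A B assume face: "interval A B \<noteq> {} \<and> interval A B \<subseteq> interval U W"
  then obtain X where "X \<in> interval A B" by blast
  then have "A \<subseteq> B" by auto
  then have "A \<in> interval A B" "B \<in> interval A B" by simp_all
  then have "A \<in> interval U W" "B \<in> interval U W" using face by blast+
  then have "U \<subseteq> A" "B \<subseteq> W" by simp_all
  with \<open>A \<subseteq> B\<close> show "\<exists>!V. is_sink_in_face Ori A B V"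
    by (intro unique_sink_if_inj_on_face[OF assms(1)] inj_on_face_outmap[OF assms])
qed

end
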